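(* Let $A\in\mathbb{C}^{n\times n}$ be Hermitian, $\beta>0$, $f(\mathbf{z})=\frac12\mathbf{z}^*A\mathbf{z}+\frac{\beta}{2}\sum_{k}|z_k|^4$, and let $\mathbf{z}\in\mathbb{CS}^{n-1}$ be a stationary point of $\min_{\mathbf{z}\in\mathbb{CS}^{n-1}}f(\mathbf{z})$. Then $\mathbf{z}$ is a local minimizer of $f$ on $\mathbb{CS}^{n-1}$ if and only if there exists a constant $M_{\mathbf{z}}>0$ such that $G(\mathbf{v},t)\ge 0$ for all $\mathbf{v}\in\mathcal{T}_{\mathbf{z}}\cap\mathbb{CS}^{n-1}$ and all $t\in\mathbb{R}$ with $|t|\ge M_{\mathbf{z}}$.
   Context: $\mathbb{CS}^{n-1}$ is the unit sphere of $\mathbb{C}^n$. A point $\mathbf{z}\in\mathbb{CS}^{n-1}$ is stationary if $[A+2\beta\,\mathrm{diag}(|\mathbf{z}|^2)]\mathbf{z}=2\lambda\mathbf{z}$, where $\lambda=\frac12\mathbf{z}^*A\mathbf{z}+\beta\|\mathbf{z}\|_4^4$ and $|\mathbf{z}|^2=(|z_1|^2,\dots,|z_n|^2)$. The tangent space is $\mathcal{T}_{\mathbf{z}}=\{\mathbf{v}\in\mathbb{C}^n:\mathrm{Re}(\mathbf{v}^*\mathbf{z})=0\}$. Define $H_f(\mathbf{z})[\mathbf{v}]=\mathbf{v}^*[A+2\beta\,\mathrm{diag}(|\mathbf{z}|^2)-2\lambda I]\mathbf{v}+4\beta\sum_{k}\mathrm{Re}(v_k\bar z_k)^2$, $H_3(\mathbf{v})=\beta\sum_k(|v_k|^2-|z_k|^2)\mathrm{Re}(\bar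 z_kv_k)$, and $G(\mathbf{v},t)=H_f(\mathbf{z})[\mathbf{v}]\,t^2+4H_3(\mathbf{v})\,t+2[f(\mathbf{v})-f(\mathbf{z})]$. *)

theory Defs
  imports "HOL-Analysis.Analysis"
begin

text \<open>Vectors in C^n are modelled as complex^'n for a finite index type 'n
  (norm is the Euclidean 2-norm); n x n matrices as complex^'n^'n.\<close>

definition hermitian :: "complex^'n^'n \<Rightarrow> bool" where
  "hermitian A \<longleftrightarrow> (\<forall>i j. A$i$j = cnj (A$j$i))"

text \<open>Quadratic form v^* M v (real part; it is real for Hermitian M).\<close>
definition qform :: "complex^'n^'n \<Rightarrow> complex^'n \<Rightarrow> real" where
  "qform M v = Re (\<Sum>i\<in>UNIV. \<Sum>j\<in>UNIV. cnj (v$i) * M$i$j * v$j)"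

definition norm4_4 :: "complex^'n \<Rightarrow> real" where
  "norm4_4 z = (\<Sum>k\<in>UNIV. (cmod (z$k))^4)"

definition fobj :: "complex^'n^'n \<Rightarrow> real \<Rightarrow> complex^'n \<Rightarrow> real" where
  "fobj A \<beta> z = qform A z / 2 + \<beta> / 2 * norm4_4 z"

definition lam :: "complex^'n^'n \<Rightarrow> real \<Rightarrow> complex^'n \<Rightarrow> real" where
  "lam A \<beta> z = qform A z / 2 + \<beta> * norm4_4 z"

definition shifted :: "complex^'n^'n \<Rightarrow> real \<Rightarrow> complex^'n \<Rightarrow> complex^'n^'n" where
  "shifted A \<beta> z = (\<chi> i j. A$i$j + (if i = j then complex_of_real (2 * \<beta> * (cmod (z$i))^2) else 0)
                              - (if i = j then complex_of_real (2 * lam A \<beta> z) else 0))"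

definition stationary :: "complex^'n^'n \<Rightarrow> real \<Rightarrow> complex^'n \<Rightarrow> bool" where
  "stationary A \<beta> z \<longleftrightarrow> norm z = 1 \<and>
     (\<forall>i. (\<Sum>j\<in>UNIV. A$i$j * z$j) + complex_of_real (2 * \<beta> * (cmod (z$i))^2) * z$i
          = complex_of_real (2 * lam A \<beta> z) * z$i)"

definition tangent :: "complex^'n \<Rightarrow> complex^'n \<Rightarrow> bool" where
  "tangent z v \<longleftrightarrow> Re (\<Sum>k\<in>UNIV. cnj (v$k) * z$k) = 0"

definition Hf :: "complex^'n^'n \<Rightarrow> real \<Rightarrow> complex^'n \<Rightarrow> complex^'n \<Rightarrow> real" where
  "Hf A \<beta> z v = qform (shifted A \<beta> z) v + 4 * \<beta> * (\<Sum>k\<in>UNIV. (Re (v$k * cnj (z$k)))^2)"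

definition H3 :: "real \<Rightarrow> complex^'n \<Rightarrow> complex^'n \<Rightarrow> real" where
  "H3 \<beta> z v = \<beta> * (\<Sum>k\<in>UNIV. ((cmod (v$k))^2 - (cmod (z$k))^2) * Re (cnj (z$k) * v$k))"

definition Gfun :: "complex^'n^'n \<Rightarrow> real \<Rightarrow> complex^'n \<Rightarrow> complex^'n \<Rightarrow> real \<Rightarrow> real" where
  "Gfun A \<beta> z v t = Hf A \<beta> z v * t^2 + 4 * H3 \<beta> z v * t + 2 * (fobj A \<beta> v - fobj A \<beta> z)"

definition local_min_sphere :: "complex^'n^'n \<Rightarrow> real \<Rightarrow> complex^'n \<Rightarrow> bool" where
  "local_min_sphere A \<beta> z \<longleftrightarrow> norm z = 1 \<and>
     (\<exists>\<epsilon>>0. \<forall>w. norm w = 1 \<and> dist w z < \<epsilon> \<longrightarrow> fobj A \<beta> z \<le> fobj A \<beta> w)"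

end

theory Submission
  imports Defs
begin

text \<open>For a unit tangent vector v at z and a real s, the point
  w = (z + s v) / sqrt (1 + s^2) lies on the sphere. Expanding f along this curve, with
  stationarity rewriting the term linear in s, gives the exact identity
  2 (1 + s^2)^2 (f w - f z) = s^4 G(v, 1/s). The distance from w to z is at most |s|, and
  conversely every point of the sphere close to z is such a w with s at most twice its
  distance to z.\<close>

lemma dist_sq_unit_vectors:
  fixes x y :: "'a::real_inner"
  assumes "norm x = 1" "norm y = 1"
  shows "(dist x y)\<^sup>2 = 2 - 2 * (x \<bullet> y)"
  using assms by (simp add: dot_norm_neg[of x y] dist_norm field_simps)

lemma norm_add_scaleR_orthogonal:
  fixes z v :: "'a::real_inner"
  assumes "norm z = 1" "norm v = 1" "v \<bullet> z = 0"
  shows "norm (z + s *\<^sub>R v) = sqrt (1 + s\<^sup>2)"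
proof -
  have "z \<bullet> z = 1" "v \<bullet> v = 1"
    using assms(1,2) by (simp_all add: norm_eq_1)
  then have "(norm (z + s *\<^sub>R v))\<^sup>2 = 1 + s\<^sup>2"
    using assms(3) unfolding power2_norm_eq_inner
    by (simp add: inner_add_left inner_add_right inner_commute power2_eq_square)
  then show ?thesis by (metis norm_ge_zero real_sqrt_unique)
qed

definition sphere_retraction :: "'a::real_normed_vector \<Rightarrow> 'a \<Rightarrow> real \<Rightarrow> 'a" where
  "sphere_retraction z v s = (1 / sqrt (1 + s\<^sup>2)) *\<^sub>R (z + s *\<^sub>R v)"

lemma sphere_retraction_0 [simp]: "sphere_retraction z v 0 = z"
  by (simp add: sphere_retraction_def)

lemma norm_sphere_retraction:
  fixes z v :: "'a::real_inner"
  assumes "norm z = 1" "norm v = 1" "v \<bullet> z = 0"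
  shows "norm (sphere_retraction z v s) = 1"
  using norm_add_scaleR_orthogonal[OF assms] add_pos_nonneg[OF zero_less_one zero_le_power2[of s]]
  by (simp add: sphere_retraction_def)

lemma dist_sphere_retraction_le:
  fixes z v :: "'a::real_inner"
  assumes "norm z = 1" "norm v = 1" "v \<bullet> z = 0"
  shows "dist (sphere_retraction z v s) z \<le> \<bar>s\<bar>"
proof -
  define r where "r = sqrt (1 + s\<^sup>2)"
  have r1: "r \<ge> 1" by (simp add: r_def)
  have "r \<le> 1 + s\<^sup>2 / 2"
    unfolding r_def by (rule real_le_lsqrt) (simp_all add: power2_sum)
  moreover have "s\<^sup>2 \<le> s\<^sup>2 * r"
    using r1 by (simp add: mult_le_cancel_left1)
  ultimately have "2 - 2 / r \<le> s\<^sup>2"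
    using r1 by (simp add: field_simps)
  moreover have "sphere_retraction z v s \<bullet> z = 1 / r"
    using assms by (simp add: sphere_retraction_def r_def inner_add_left norm_eq_1)
  ultimately have "(dist (sphere_retraction z v s) z)\<^sup>2 \<le> s\<^sup>2"
    using assms by (simp add: dist_sq_unit_vectors norm_sphere_retraction)
  then show ?thesis by (metis real_le_rsqrt real_sqrt_abs)
qed

lemma inverse_square_minus_one_le:
  fixes c :: real
  assumes "1/2 < c" "c \<le> 1"
  shows "1 / c\<^sup>2 - 1 \<le> 8 * (1 - c)"
proof -
  have "(1/2)\<^sup>2 < c\<^sup>2" using assms(1) by (intro power_strict_mono) auto
  then have "1 + c \<le> 8 * c\<^sup>2" using assms(2) by (simp add: power_divide)
  then have "(1 + c) / c\<^sup>2 \<le> 8" using assms(1) by (simp add: divide_le_eq)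
  then have "(1 - c) * ((1 + c) / c\<^sup>2) \<le> (1 - c) * 8"
    using assms(2) by (intro mult_left_mono) auto
  moreover have "1 / c\<^sup>2 - 1 = (1 - c) * ((1 + c) / c\<^sup>2)"
    using assms(1) by (simp add: field_simps power2_eq_square)
  ultimately show ?thesis by simp
qed

lemma sphere_retraction_onto:
  fixes z w :: "'a::real_inner"
  assumes "norm z = 1" "norm w = 1" "w \<noteq> z" "dist w z < 1"
  obtains v s where "norm v = 1" "v \<bullet> z = 0" "0 < s" "s \<le> 2 * dist w z"
    "w = sphere_retraction z v s"
proof -
  define c where "c = w \<bullet> z"
  define d where "d = dist w z"
  have d2: "d\<^sup>2 = 2 - 2 * c"
    unfolding c_def d_def using assms(2,1) by (rule dist_sq_unit_vectors)
  have "d\<^sup>2 < 1" using assms(4) by (simp add: d_def power_less_one_iff)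
  then have c_gt: "c > 1/2" using d2 by simp
  have c_le: "c \<le> 1" using d2 zero_le_power2[of d] by linarith
  define y where "y = (1 / c) *\<^sub>R w - z"
  define s where "s = norm y"
  have yz: "y \<bullet> z = 0"
    using c_gt assms(1) by (simp add: y_def c_def inner_diff_left norm_eq_1)
  have "s \<noteq> 0"
  proof
    assume "s = 0"
    then have "z = (1 / c) *\<^sub>R w" by (simp add: s_def y_def)
    then have "w = c *\<^sub>R z" using c_gt by simp
    then show False using assms c_gt by simp
  qed
  then have s_pos: "s > 0" by (simp add: s_def)
  define v where "v = (1 / s) *\<^sub>R y"
  have v1: "norm v = 1" and vz: "v \<bullet> z = 0"
    using s_pos yz by (simp_all add: v_def s_def)
  have w_eq: "(1 / c) *\<^sub>R w = z + s *\<^sub>R v"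
    using s_pos by (simp add: v_def y_def)
  then have "norm ((1 / c) *\<^sub>R w) = sqrt (1 + s\<^sup>2)"
    using norm_add_scaleR_orthogonal[OF assms(1) v1 vz] by simp
  then have "1 / c = sqrt (1 + s\<^sup>2)"
    using assms(2) c_gt by simp
  then have s2: "s\<^sup>2 = 1 / c\<^sup>2 - 1"
    by (metis add_diff_cancel_left' power_divide real_sqrt_pow2 add_nonneg_nonneg zero_le_one
        zero_le_power2 power_one)
  have "s\<^sup>2 \<le> (2 * d)\<^sup>2"
    using s2 d2 inverse_square_minus_one_le[OF c_gt c_le] by (simp add: power_mult_distrib)
  then have s_le: "s \<le> 2 * d" by (rule power2_le_imp_le) (simp add: d_def)
  have "w = c *\<^sub>R ((1 / c) *\<^sub>R w)" using c_gt by simp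
  then have w_eq': "w = sphere_retraction z v s"
    unfolding w_eq sphere_retraction_def \<open>1 / c = sqrt (1 + s\<^sup>2)\<close>[symmetric] by simp
  show ?thesis using that[OF v1 vz s_pos] s_le w_eq' by (simp add: d_def)
qed

lemma local_min_on_sphere_iff_retraction:
  fixes f :: "'a::real_inner \<Rightarrow> real" and z :: 'a
  assumes "norm z = 1"
  shows "(\<exists>\<epsilon>>0. \<forall>w. norm w = 1 \<and> dist w z < \<epsilon> \<longrightarrow> f z \<le> f w) \<longleftrightarrow>
    (\<exists>\<delta>>0. \<forall>v s. norm v = 1 \<and> v \<bullet> z = 0 \<and> \<bar>s\<bar> < \<delta> \<longrightarrow> f z \<le> f (sphere_retraction z v s))"
proof
  assume "\<exists>\<epsilon>>0. \<forall>w. norm w = 1 \<and> dist w z < \<epsilon> \<longrightarrow> f z \<le> f w"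
  then obtain \<epsilon> where "\<epsilon> > 0" and min: "\<And>w. norm w = 1 \<Longrightarrow> dist w z < \<epsilon> \<Longrightarrow> f z \<le> f w"
    by blast
  have "f z \<le> f (sphere_retraction z v s)" if "norm v = 1" "v \<bullet> z = 0" "\<bar>s\<bar> < \<epsilon>" for v s
  proof (rule min)
    show "norm (sphere_retraction z v s) = 1" by (rule norm_sphere_retraction[OF assms that(1,2)])
    show "dist (sphere_retraction z v s) z < \<epsilon>"
      using dist_sphere_retraction_le[OF assms that(1,2)] that(3) by (rule order.strict_trans1)
  qed
  with \<open>\<epsilon> > 0\<close>
  show "\<exists>\<delta>>0. \<forall>v s. norm v = 1 \<and> v \<bullet> z = 0 \<and> \<bar>s\<bar> < \<delta> \<longrightarrow> f z \<le> f (sphere_retraction z v s)"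
    by blast
next
  assume "\<exists>\<delta>>0. \<forall>v s. norm v = 1 \<and> v \<bullet> z = 0 \<and> \<bar>s\<bar> < \<delta> \<longrightarrow> f z \<le> f (sphere_retraction z v s)"
  then obtain \<delta> where "\<delta> > 0"
    and min: "\<And>v s. norm v = 1 \<Longrightarrow> v \<bullet> z = 0 \<Longrightarrow> \<bar>s\<bar> < \<delta> \<Longrightarrow> f z \<le> f (sphere_retraction z v s)"
    by blast
  have "f z \<le> f w" if w1: "norm w = 1" and near: "dist w z < min 1 (\<delta> / 2)" for w
  proof (cases "w = z")
    case False
    then obtain v s where "norm v = 1" "v \<bullet> z = 0" "0 < s" "s \<le> 2 * dist w z"
      "w = sphere_retraction z v s"
      using sphere_retraction_onto[OF assms w1] near by auto
    then show ?thesis using min near by auto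
  qed simp
  with \<open>\<delta> > 0\<close> show "\<exists>\<epsilon>>0. \<forall>w. norm w = 1 \<and> dist w z < \<epsilon> \<longrightarrow> f z \<le> f w"
    by (intro exI[of _ "min 1 (\<delta> / 2)"]) auto
qed

lemma ex_small_iff_ex_large_reciprocal:
  fixes Q :: "'a \<Rightarrow> real \<Rightarrow> bool"
  shows "(\<exists>\<delta>>0. \<forall>x s. P x \<and> s \<noteq> 0 \<and> \<bar>s\<bar> < \<delta> \<longrightarrow> Q x (1 / s)) \<longleftrightarrow>
    (\<exists>M>0. \<forall>x t. P x \<and> \<bar>t\<bar> \<ge> M \<longrightarrow> Q x t)"
proof
  assume "\<exists>\<delta>>0. \<forall>x s. P x \<and> s \<noteq> 0 \<and> \<bar>s\<bar> < \<delta> \<longrightarrow> Q x (1 / s)"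
  then obtain \<delta> where "\<delta> > 0" and small: "\<And>x s. P x \<Longrightarrow> s \<noteq> 0 \<Longrightarrow> \<bar>s\<bar> < \<delta> \<Longrightarrow> Q x (1 / s)"
    by blast
  have "Q x t" if "P x" "\<bar>t\<bar> \<ge> 2 / \<delta>" for x t
  proof -
    have "2 \<le> \<delta> * \<bar>t\<bar>" using that(2) \<open>\<delta> > 0\<close> by (simp add: field_simps)
    then have "t \<noteq> 0" "\<bar>1 / t\<bar> < \<delta>" by (auto simp: divide_less_eq mult.commute)
    then show ?thesis using small[OF that(1), of "1 / t"] by simp
  qed
  with \<open>\<delta> > 0\<close> show "\<exists>M>0. \<forall>x t. P x \<and> \<bar>t\<bar> \<ge> M \<longrightarrow> Q x t"
    by (intro exI[of _ "2 / \<delta>"]) auto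
next
  assume "\<exists>M>0. \<forall>x t. P x \<and> \<bar>t\<bar> \<ge> M \<longrightarrow> Q x t"
  then obtain M where "M > 0" and large: "\<And>x t. P x \<Longrightarrow> \<bar>t\<bar> \<ge> M \<Longrightarrow> Q x t"
    by blast
  have "Q x (1 / s)" if "P x" "s \<noteq> 0" "\<bar>s\<bar> < 1 / M" for x s
    using that \<open>M > 0\<close> by (intro large) (auto simp: field_simps)
  with \<open>M > 0\<close> show "\<exists>\<delta>>0. \<forall>x s. P x \<and> s \<noteq> 0 \<and> \<bar>s\<bar> < \<delta> \<longrightarrow> Q x (1 / s)"
    by (intro exI[of _ "1 / M"]) auto
qed

lemma inner_vec_complex: "(x::complex^'n) \<bullet> y = (\<Sum>k\<in>UNIV. Re (cnj (x$k) * y$k))"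
  by (simp add: inner_vec_def inner_complex_def)

lemma tangent_iff_inner: "tangent z v \<longleftrightarrow> v \<bullet> z = 0"
  by (simp add: tangent_def inner_vec_complex)

lemma inner_matrix_vector_mult:
  "x \<bullet> (M *v y) = Re (\<Sum>i\<in>UNIV. \<Sum>j\<in>UNIV. cnj (x$i) * M$i$j * y$j)"
  by (simp add: inner_vec_complex matrix_vector_mult_def sum_distrib_left mult.assoc)

lemma qform_eq_inner: "qform M v = v \<bullet> (M *v v)"
  by (simp add: qform_def inner_matrix_vector_mult)

lemma inner_matrix_vector_mult_hermitian:
  assumes "hermitian A"
  shows "x \<bullet> (A *v y) = y \<bullet> (A *v x)"
proof -
  have cnj_A: "cnj (A$i$j) = A$j$i" for i j
    using assms by (metis hermitian_def)
  have "x \<bullet> (A *v y) = Re (cnj (\<Sum>i\<in>UNIV. \<Sum>j\<in>UNIV. cnj (x$i) * A$i$j * y$j))"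
    by (simp only: inner_matrix_vector_mult cnj.sel)
  also have "\<dots> = Re (\<Sum>i\<in>UNIV. \<Sum>j\<in>UNIV. cnj (y$j) * A$j$i * x$i)"
    by (simp add: cnj_A mult_ac)
  also have "\<dots> = Re (\<Sum>j\<in>UNIV. \<Sum>i\<in>UNIV. cnj (y$j) * A$j$i * x$i)"
    by (subst sum.swap) (rule refl)
  also have "\<dots> = y \<bullet> (A *v x)"
    by (simp only: inner_matrix_vector_mult)
  finally show ?thesis .
qed

lemma qform_scaleR: "qform M (c *\<^sub>R v) = c\<^sup>2 * qform M v"
  by (simp add: qform_eq_inner linear_scale[OF matrix_vector_mul_linear] power2_eq_square)

lemma qform_add_scaleR:
  assumes "hermitian A"
  shows "qform A (z + s *\<^sub>R v) = qform A z + 2 * s * (v \<bullet> (A *v z)) + s\<^sup>2 * qform A v"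
  using inner_matrix_vector_mult_hermitian[OF assms, of z v]
  by (simp add: qform_eq_inner linear_scale[OF matrix_vector_mul_linear] power2_eq_square
      algebra_simps)

lemma matrix_vector_mult_shifted:
  "shifted A \<beta> z *v v = A *v v + (\<chi> i. of_real (2 * \<beta> * (cmod (z$i))\<^sup>2 - 2 * lam A \<beta> z) * v$i)"
  by (simp add: vec_eq_iff matrix_vector_mult_def shifted_def ring_distribs sum.distrib
      sum_subtractf if_distrib[of "\<lambda>x. x * _"] cong: if_cong)

lemma stationary_iff_shifted:
  "stationary A \<beta> z \<longleftrightarrow> norm z = 1 \<and> shifted A \<beta> z *v z = 0"
proof -
  have "(shifted A \<beta> z *v z)$i = (\<Sum>j\<in>UNIV. A$i$j * z$j)
      + of_real (2 * \<beta> * (cmod (z$i))\<^sup>2) * z$i - of_real (2 * lam A \<beta> z) * z$i" for i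
    unfolding matrix_vector_mult_shifted by (simp add: matrix_vector_mult_def left_diff_distrib)
  then show ?thesis by (simp add: stationary_def vec_eq_iff)
qed

lemma inner_matrix_vector_mult_stationary:
  assumes "stationary A \<beta> z"
  shows "v \<bullet> (A *v z) = 2 * lam A \<beta> z * (v \<bullet> z)
    - 2 * \<beta> * (\<Sum>k\<in>UNIV. (cmod (z$k))\<^sup>2 * Re (cnj (z$k) * v$k))"
proof -
  have "A *v z = - (\<chi> i. of_real (2 * \<beta> * (cmod (z$i))\<^sup>2 - 2 * lam A \<beta> z) * z$i)"
    using assms by (simp add: stationary_iff_shifted matrix_vector_mult_shifted eq_neg_iff_add_eq_0)
  moreover have "Re (cnj (v$k) * z$k) = Re (cnj (z$k) * v$k)" for k
    by (metis cnj.sel(1) complex_cnj_cnj complex_cnj_mult mult.commute)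
  ultimately show ?thesis
    by (simp add: inner_vec_complex sum_distrib_left sum_subtractf algebra_simps)
qed

lemma qform_shifted:
  "qform (shifted A \<beta> z) v
    = qform A v + (\<Sum>k\<in>UNIV. (2 * \<beta> * (cmod (z$k))\<^sup>2 - 2 * lam A \<beta> z) * (cmod (v$k))\<^sup>2)"
proof -
  have "Re (cnj w * (of_real c * w)) = c * (cmod w)\<^sup>2" for w c
    unfolding cmod_power2 by (simp add: power2_eq_square algebra_simps)
  then show ?thesis
    unfolding qform_eq_inner matrix_vector_mult_shifted inner_add_right
    by (simp only: inner_vec_complex vec_lambda_beta)
qed

lemma cmod_add_scaleR_power2:
  "(cmod (a + s *\<^sub>R b))\<^sup>2 = (cmod a)\<^sup>2 + 2 * s * Re (cnj a * b) + s\<^sup>2 * (cmod b)\<^sup>2"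
  unfolding cmod_power2 by (simp add: scaleR_conv_of_real power2_eq_square algebra_simps)

lemma norm4_4_scaleR: "norm4_4 (c *\<^sub>R u) = c ^ 4 * norm4_4 u"
  by (simp add: norm4_4_def sum_distrib_left power_mult_distrib)

lemma norm4_4_add_scaleR:
  "norm4_4 (z + s *\<^sub>R v) = norm4_4 z
    + 4 * s * (\<Sum>k\<in>UNIV. (cmod (z$k))\<^sup>2 * Re (cnj (z$k) * v$k))
    + s\<^sup>2 * (4 * (\<Sum>k\<in>UNIV. (Re (cnj (z$k) * v$k))\<^sup>2) + 2 * (\<Sum>k\<in>UNIV. (cmod (z$k))\<^sup>2 * (cmod (v$k))\<^sup>2))
    + 4 * s ^ 3 * (\<Sum>k\<in>UNIV. (cmod (v$k))\<^sup>2 * Re (cnj (z$k) * v$k))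
    + s ^ 4 * norm4_4 v"
proof -
  have "(cmod (z$k + s *\<^sub>R v$k)) ^ 4
      = ((cmod (z$k))\<^sup>2 + 2 * s * Re (cnj (z$k) * v$k) + s\<^sup>2 * (cmod (v$k))\<^sup>2)\<^sup>2" for k unfolding cmod_add_scaleR_power2[symmetric] by simp
  then show ?thesis
    by (simp add: norm4_4_def sum.distrib sum_distrib_left power2_eq_square power3_eq_cube
        power4_eq_xxxx algebra_simps)
qed

lemma fobj_sphere_retraction:
  assumes "hermitian A" "stationary A \<beta> z" "tangent z v" "norm v = 1"
  shows "2 * (1 + s\<^sup>2)\<^sup>2 * (fobj A \<beta> (sphere_retraction z v s) - fobj A \<beta> z)
    = s\<^sup>2 * Hf A \<beta> z v + 4 * s ^ 3 * H3 \<beta> z v + 2 * s ^ 4 * (fobj A \<beta> v - fobj A \<beta> z)"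
proof -
  define a where "a = (\<Sum>k\<in>UNIV. (cmod (z$k))\<^sup>2 * Re (cnj (z$k) * v$k))"
  define b where "b = (\<Sum>k\<in>UNIV. (cmod (v$k))\<^sup>2 * Re (cnj (z$k) * v$k))"
  define p where "p = (\<Sum>k\<in>UNIV. (cmod (z$k))\<^sup>2 * (cmod (v$k))\<^sup>2)"
  define r where "r = (\<Sum>k\<in>UNIV. (Re (cnj (z$k) * v$k))\<^sup>2)"
  define lambda where "lambda = lam A \<beta> z"
  have vz: "v \<bullet> z = 0" using assms(3) by (simp add: tangent_iff_inner)
  have q: "qform A (z + s *\<^sub>R v) = qform A z - 4 * \<beta> * s * a + s\<^sup>2 * qform A v"
    using inner_matrix_vector_mult_stationary[OF assms(2), of v] vz
    by (simp add: qform_add_scaleR[OF assms(1)] a_def)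
  have n4: "norm4_4 (z + s *\<^sub>R v)
      = norm4_4 z + 4 * s * a + s\<^sup>2 * (4 * r + 2 * p) + 4 * s ^ 3 * b + s ^ 4 * norm4_4 v"
    unfolding norm4_4_add_scaleR a_def b_def p_def r_def ..
  have "(\<Sum>k\<in>UNIV. (cmod (v$k))\<^sup>2) = 1"
    using assms(4) by (simp add: norm_vec_def L2_set_def)
  then have "(\<Sum>k\<in>UNIV. (2 * \<beta> * (cmod (z$k))\<^sup>2 - 2 * lambda) * (cmod (v$k))\<^sup>2)
      = 2 * \<beta> * p - 2 * lambda"
    by (simp add: p_def left_diff_distrib sum_subtractf sum_distrib_left mult.assoc
        flip: sum_distrib_left)
  then have hf: "Hf A \<beta> z v = qform A v + 2 * \<beta> * p - 2 * lambda + 4 * \<beta> * r"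
    by (simp add: Hf_def qform_shifted r_def lambda_def mult.commute)
  have h3: "H3 \<beta> z v = \<beta> * (b - a)"
    by (simp add: H3_def a_def b_def left_diff_distrib sum_subtractf)
  have "2 * (1 + s\<^sup>2)\<^sup>2 * fobj A \<beta> (sphere_retraction z v s)
      = (1 + s\<^sup>2) * qform A (z + s *\<^sub>R v) + \<beta> * norm4_4 (z + s *\<^sub>R v)"
  proof -
    define N where "N = 1 + s\<^sup>2"
    have "N > 0" by (simp add: N_def add_pos_nonneg)
    then have c2: "(1 / sqrt N)\<^sup>2 = 1 / N" by (simp add: power_divide)
    then have c4: "(1 / sqrt N) ^ 4 = 1 / N\<^sup>2"
      by (metis power2_eq_square power_one_over numeral_Bit0 power_add)
    from \<open>N > 0\<close> show ?thesis
      unfolding sphere_retraction_def N_def[symmetric] fobj_def qform_scaleR norm4_4_scaleR c2 c4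
      by (simp add: field_simps power2_eq_square)
  qed
  then show ?thesis
    unfolding right_diff_distrib q n4 hf h3
    by (simp add: fobj_def lambda_def lam_def power2_eq_square power3_eq_cube power4_eq_xxxx
        algebra_simps)
qed

lemma Gfun_reciprocal:
  assumes "s \<noteq> 0"
  shows "s ^ 4 * Gfun A \<beta> z v (1 / s)
    = s\<^sup>2 * Hf A \<beta> z v + 4 * s ^ 3 * H3 \<beta> z v + 2 * s ^ 4 * (fobj A \<beta> v - fobj A \<beta> z)"
  using assms by (simp add: Gfun_def field_simps power2_eq_square power3_eq_cube power4_eq_xxxx)

lemma fobj_le_sphere_retraction_iff:
  assumes "hermitian A" "stationary A \<beta> z" "tangent z v" "norm v = 1" "s \<noteq> 0"
  shows "fobj A \<beta> z \<le> fobj A \<beta> (sphere_retraction z v s) \<longleftrightarrow> 0 \<le> Gfun A \<beta> z v (1 / s)"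
proof -
  have "1 + s\<^sup>2 > 0" by (simp add: add_pos_nonneg)
  then have "fobj A \<beta> z \<le> fobj A \<beta> (sphere_retraction z v s) \<longleftrightarrow>
      0 \<le> 2 * (1 + s\<^sup>2)\<^sup>2 * (fobj A \<beta> (sphere_retraction z v s) - fobj A \<beta> z)"
    by (simp add: zero_le_mult_iff)
  also have "\<dots> \<longleftrightarrow> 0 \<le> s ^ 4 * Gfun A \<beta> z v (1 / s)"
    unfolding fobj_sphere_retraction[OF assms(1-4)] Gfun_reciprocal[OF assms(5)] ..
  also have "\<dots> \<longleftrightarrow> 0 \<le> Gfun A \<beta> z v (1 / s)"
    using assms(5) by (simp add: zero_le_mult_iff)
  finally show ?thesis .
qed

theorem theorem2:
  fixes A :: "complex^'n^'n" and \<beta> :: real and z :: "complex^'n"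
  assumes "hermitian A" and "\<beta> > 0" and "stationary A \<beta> z"
  shows "local_min_sphere A \<beta> z \<longleftrightarrow>
    (\<exists>M>0. \<forall>v t. tangent z v \<and> norm v = 1 \<and> \<bar>t\<bar> \<ge> M \<longrightarrow> Gfun A \<beta> z v t \<ge> 0)"
proof -
  let ?f = "fobj A \<beta>"
  have z1: "norm z = 1" using assms(3) by (simp add: stationary_def)
  have "local_min_sphere A \<beta> z \<longleftrightarrow>
      (\<exists>\<delta>>0. \<forall>v s. norm v = 1 \<and> v \<bullet> z = 0 \<and> \<bar>s\<bar> < \<delta> \<longrightarrow> ?f z \<le> ?f (sphere_retraction z v s))"
    using local_min_on_sphere_iff_retraction[OF z1, of ?f] z1 by (simp add: local_min_sphere_def)
  also have "\<dots> \<longleftrightarrow> (\<exists>\<delta>>0. \<forall>v s. (tangent z v \<and> norm v = 1) \<and> s \<noteq> 0 \<and> \<bar>s\<bar> < \<delta>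
      \<longrightarrow> 0 \<le> Gfun A \<beta> z v (1 / s))"
  proof -
    have "(norm v = 1 \<and> v \<bullet> z = 0 \<and> \<bar>s\<bar> < \<delta> \<longrightarrow> ?f z \<le> ?f (sphere_retraction z v s)) \<longleftrightarrow>
      ((tangent z v \<and> norm v = 1) \<and> s \<noteq> 0 \<and> \<bar>s\<bar> < \<delta> \<longrightarrow> 0 \<le> Gfun A \<beta> z v (1 / s))" for v s \<delta>
      using fobj_le_sphere_retraction_iff[OF assms(1,3)]
      by (cases "s = 0") (auto simp: tangent_iff_inner)
    then show ?thesis by simp
  qed
  also have "\<dots> \<longleftrightarrow> (\<exists>M>0. \<forall>v t. tangent z v \<and> norm v = 1 \<and> \<bar>t\<bar> \<ge> M \<longrightarrow> Gfun A \<beta> z v t \<ge> 0)"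
    using ex_small_iff_ex_large_reciprocal
      [of "\<lambda>v. tangent z v \<and> norm v = 1" "\<lambda>v t. 0 \<le> Gfun A \<beta> z v t"]
    by simp
  finally show ?thesis .
qed

end
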